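(* Let $m\ge 2$ be an integer and let $\mathcal{A}\subset\mathbb{R}$ be a finite alphabet. Let $(X^{(j)}_i)_{i\ge 1,\,1\le j\le m}$ be independent and identically distributed random variables with values in $\mathcal{A}$. Let $S:\mathcal{A}^m\to[0,\infty)$ be a function that is not identically zero, is invariant under permutations of its $m$ arguments, satisfies $\sup_{x\in\mathcal{A}^m}S(x)<\infty$, and for which there is a constant $D>0$ such that $|S(x)-S(y)|\le D$ whenever $x,y\in\mathcal{A}^m$ differ in at most one coordinate. Let $\gamma^*$ and $\gamma^*(p_2,\dots,p_m)$ be as defined in the context. Let $\varepsilon>0$, let $\delta^*\in(0,\gamma^* )$, and let $\boldsymbol p^{(1)}=(p^{(1)}_1,\dots,p^{(1)}_m)$, $\boldsymbol p^{(2)}=(p^{(2)}_1,\dots,p^{(2)}_m)$ satisfy $0<p^{(1)}_j<1<p^{(2)}_j$ for $j=2,\dots,m$, and be such that $\gamma^*(p_2,\dots,p_m)\le\delta^*$ for every $(p_2,\dots,p_m)\in(0,\infty)^{m-1}$ with $p_j\notin[p^{(1)}_j,p^{(2)}_j]$ for at least one $j\in\{2,\dots,m\}$. Let $\eta\in(0,\gamma^*-\delta^* )$. Then there exists $N=N(\varepsilon,\eta,\boldsymbol p^{(1)},\boldsymbol p^{(2)})$ such that for every $n\ge N$, all positive integers $v,d$ with $n=vd$, and every $\vec r\in\overline{\mathcal R}_{n,\varepsilon}(\boldsymbol p^{(1)},\boldsymbol p^{(2)})$, $$\mathbb{E}\big(L(\vec r)-L_n\big)\le-\frac{\eta\varepsilon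 n}{m}.$$
   Context: Alignments and optimal score: for finite words $w^{(1)},\dots,w^{(m)}$ over $\mathcal{A}$ of lengths $\ell_1,\dots,\ell_m$, an alignment is a choice of an integer $k\ge 0$ and, for each $j$, indices $1\le \pi^{(j)}_1<\cdots<\pi^{(j)}_k\le \ell_j$; its score is $\sum_{i=1}^k S(w^{(1)}_{\pi^{(1)}_i},\dots,w^{(m)}_{\pi^{(m)}_i})$. The optimal score $L(w^{(1)};\dots;w^{(m)})$ is the maximum score over all alignments (empty words allowed). $L_n$ denotes the optimal score of the words $X^{(j)}_1\cdots X^{(j)}_n$, $j=1,\dots,m$, and $\gamma^*:=\lim_n\mathbb{E}(L_n)/n=\sup_n\mathbb{E}(L_n)/n$. For $p_2,\dots,p_m>0$, $\gamma^*(p_2,\dots,p_m):=\lim_{n\to\infty}\frac{m\,\mathbb{E}\big(L(X^{(1)}_1\cdots X^{(1)}_n;\,X^{(2)}_1\cdots X^{(2)}_{\lceil np_2\rceil};\cdots;X^{(m)}_1\cdots X^{(m)}_{\lceil np_m\rceil})\big)}{n(1+\sum_{i=2}^m p_i)}$ (the limit exists). For $n=vd$, a tuple $\vec r=(r^{(j)}_k)_{2\le j\le m,\,0\le k\le d}$ of integers with $0=r^{(j)}_0\le r^{(j)}_1\le\cdots\le r^{(j)}_{d-1}\le r^{(j)}_d=n$ for each $j$ defines $L(\vec r):=\sum_{k=1}^d L\big((X^{(1)}_i)_{i=v(k-1)+1}^{vk};\,(X^{(2)}_i)_{i=r^{(2)}_{k-1}+1}^{r^{(2)}_k};\cdots;(X^{(m)}_i)_{i=r^{(m)}_{k-1}+1}^{r^{(m)}_k}\big)$.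 $\overline{\mathcal R}_{n,\varepsilon}(\boldsymbol p^{(1)},\boldsymbol p^{(2)})$ is the set of all such (non-random) tuples $\vec r$ for which $\mathrm{Card}\{k\in\{1,\dots,d\}:\ vp^{(1)}_j\le r^{(j)}_k-r^{(j)}_{k-1}\le vp^{(2)}_j\ \text{for all } j=2,\dots,m\}<(1-\varepsilon)d$. *)

theory Defs
  imports "HOL-Probability.Probability" "HOL-Combinatorics.Permutations"
begin

text \<open>Alignments are 0-indexed here: index functions pi j with values < length of word j.\<close>

definition alignments :: "real list list \<Rightarrow> (nat \<times> (nat \<Rightarrow> nat \<Rightarrow> nat)) set" where
  "alignments ws = {(k, \<pi>). \<forall>j<length ws.
       strict_mono_on {..<k} (\<pi> j) \<and> (\<forall>i<k. \<pi> j i < length (ws ! j))}"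

definition align_score :: "(real list \<Rightarrow> real) \<Rightarrow> real list list \<Rightarrow> nat \<Rightarrow> (nat \<Rightarrow> nat \<Rightarrow> nat) \<Rightarrow> real" where
  "align_score S ws k \<pi> = (\<Sum>i<k. S (map (\<lambda>j. (ws ! j) ! (\<pi> j i)) [0..<length ws]))"

definition opt_score :: "(real list \<Rightarrow> real) \<Rightarrow> real list list \<Rightarrow> real" where
  "opt_score S ws = (SUP a \<in> alignments ws. align_score S ws (fst a) (snd a))"

text \<open>The segment (X^(j)_i)_{i=a+1}^{b} of the j-th sequence (indices i are 1-based).\<close>
definition seg :: "(nat \<Rightarrow> nat \<Rightarrow> 'w \<Rightarrow> real) \<Rightarrow> nat \<Rightarrow> nat \<Rightarrow> nat \<Rightarrow> 'w \<Rightarrow> real list" where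
  "seg X j a b \<omega> = map (\<lambda>i. X j i \<omega>) [a+1..<b+1]"

definition Ln :: "(real list \<Rightarrow> real) \<Rightarrow> nat \<Rightarrow> (nat \<Rightarrow> nat \<Rightarrow> 'w \<Rightarrow> real) \<Rightarrow> nat \<Rightarrow> 'w \<Rightarrow> real" where
  "Ln S m X n \<omega> = opt_score S (map (\<lambda>j. seg X j 0 n \<omega>) [1..<m+1])"

definition gamma_star :: "'w measure \<Rightarrow> (real list \<Rightarrow> real) \<Rightarrow> nat \<Rightarrow> (nat \<Rightarrow> nat \<Rightarrow> 'w \<Rightarrow> real) \<Rightarrow> real" where
  "gamma_star M S m X = lim (\<lambda>n. (\<integral>\<omega>. Ln S m X n \<omega> \<partial>M) / real n)"

definition plen :: "(nat \<Rightarrow> real) \<Rightarrow> nat \<Rightarrow> nat \<Rightarrow> nat" where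
  "plen p n j = (if j = 1 then n else nat \<lceil>real n * p j\<rceil>)"

definition gamma_star_p :: "'w measure \<Rightarrow> (real list \<Rightarrow> real) \<Rightarrow> nat \<Rightarrow> (nat \<Rightarrow> nat \<Rightarrow> 'w \<Rightarrow> real)
    \<Rightarrow> (nat \<Rightarrow> real) \<Rightarrow> real" where
  "gamma_star_p M S m X p = lim (\<lambda>n.
      real m * (\<integral>\<omega>. opt_score S (map (\<lambda>j. seg X j 0 (plen p n j) \<omega>) [1..<m+1]) \<partial>M)
      / (real n * (1 + (\<Sum>i=2..m. p i))))"

text \<open>L(r) for n = v d; r j k for j = 2..m, k = 0..d.\<close>
definition L_r :: "(real list \<Rightarrow> real) \<Rightarrow> nat \<Rightarrow> (nat \<Rightarrow> nat \<Rightarrow> 'w \<Rightarrow> real) \<Rightarrow> nat \<Rightarrow> nat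
    \<Rightarrow> (nat \<Rightarrow> nat \<Rightarrow> nat) \<Rightarrow> 'w \<Rightarrow> real" where
  "L_r S m X v d r \<omega> = (\<Sum>k=1..d. opt_score S
      (seg X 1 (v * (k-1)) (v * k) \<omega> # map (\<lambda>j. seg X j (r j (k-1)) (r j k) \<omega>) [2..<m+1]))"

definition admissible_r :: "nat \<Rightarrow> nat \<Rightarrow> nat \<Rightarrow> (nat \<Rightarrow> nat \<Rightarrow> nat) \<Rightarrow> bool" where
  "admissible_r m v d r \<longleftrightarrow> (\<forall>j\<in>{2..m}. r j 0 = 0 \<and> r j d = v * d \<and> (\<forall>k<d. r j k \<le> r j (Suc k)))"

definition Rbar :: "nat \<Rightarrow> nat \<Rightarrow> nat \<Rightarrow> real \<Rightarrow> (nat \<Rightarrow> real) \<Rightarrow> (nat \<Rightarrow> real) \<Rightarrow> (nat \<Rightarrow> nat \<Rightarrow> nat) set" where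
  "Rbar m v d \<epsilon> p1 p2 = {r. admissible_r m v d r \<and>
      real (card {k\<in>{1..d}. \<forall>j\<in>{2..m}.
          real v * p1 j \<le> real (r j k - r j (k-1)) \<and> real (r j k - r j (k-1)) \<le> real v * p2 j})
      < (1 - \<epsilon>) * real d}"

end

theory Submission
  imports Defs
begin

text \<open>For lengths \<open>l = (l\<^sub>1, ..., l\<^sub>m)\<close> let \<open>E(l)\<close> be the expected optimal score of \<open>m\<close> words
  of these lengths cut from distinct sequences. As the letters are i.i.d., \<open>E(l)\<close> does not depend
  on where the words are cut, so \<open>E L(r)\<close> is the sum of \<open>E\<close> over the \<open>d\<close> blocks of \<open>r\<close>.
  Concatenating alignments makes \<open>E\<close> superadditive, and the symmetry of \<open>S\<close> makes it invariant
  under permuting \<open>l\<close>. Averaging over the cyclic shifts of \<open>l\<close> gives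
  \<open>m E(l) \<le> \<gamma>* (l\<^sub>1 + ... + l\<^sub>m)\<close>; along the ray \<open>t l\<close>, Fekete's lemma gives
  \<open>m E(l) \<le> \<gamma>*(p) (l\<^sub>1 + ... + l\<^sub>m)\<close> with \<open>p\<^sub>j = l\<^sub>j / l\<^sub>1\<close>, and this is at most \<open>\<delta> (l\<^sub>1 + ... + l\<^sub>m)\<close>
  for a block outside the window \<open>[p\<^sup>(\<^sup>1\<^sup>), p\<^sup>(\<^sup>2\<^sup>)]\<close>. A tuple in \<open>R-bar\<close> has more than \<open>\<epsilon> d\<close>
  such blocks, each losing at least \<open>(\<gamma>* - \<delta>) v\<close>, so \<open>m E L(r) \<le> \<gamma>* m n - (\<gamma>* - \<delta>) \<epsilon> n\<close>,
  whereas \<open>E L\<^sub>n \<ge> (\<gamma>* - o(1)) n\<close>.\<close>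

section \<open>Optimal alignment scores\<close>

lemma sum_lessThan_add_split:
  fixes b :: nat
  shows "(\<Sum>i<a + b. f i) = (\<Sum>i<a. f i) + (\<Sum>i<b. f (a + i) :: 'a :: comm_monoid_add)"
  by (induction b) (auto simp: add_ac)

lemma alignment_length_le:
  assumes "(k, \<pi>) \<in> alignments ws" "j < length ws"
  shows "k \<le> length (ws ! j)"
proof -
  have "inj_on (\<pi> j) {..<k}" and "\<pi> j ` {..<k} \<subseteq> {..<length (ws ! j)}"
    using assms strict_mono_on_imp_inj_on unfolding alignments_def by auto
  then show ?thesis
    by (metis card_image card_lessThan card_mono finite_lessThan)
qed

lemma empty_alignment: "(0, \<pi>) \<in> alignments ws"
  unfolding alignments_def by (auto simp: strict_mono_on_def)

definition align_append :: "real list list \<Rightarrow> nat \<Rightarrow> (nat \<Rightarrow> nat \<Rightarrow> nat) \<Rightarrow> (nat \<Rightarrow> nat \<Rightarrow> nat)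
    \<Rightarrow> nat \<Rightarrow> nat \<Rightarrow> nat" where
  "align_append us k\<^sub>1 \<pi>\<^sub>1 \<pi>\<^sub>2 j i = (if i < k\<^sub>1 then \<pi>\<^sub>1 j i else length (us ! j) + \<pi>\<^sub>2 j (i - k\<^sub>1))"

lemma alignments_append:
  assumes "(k\<^sub>1, \<pi>\<^sub>1) \<in> alignments us" "(k\<^sub>2, \<pi>\<^sub>2) \<in> alignments ws" "length us = length ws"
  shows "(k\<^sub>1 + k\<^sub>2, align_append us k\<^sub>1 \<pi>\<^sub>1 \<pi>\<^sub>2) \<in> alignments (map2 (@) us ws)"
  unfolding alignments_def
proof (clarsimp simp: assms(3))
  fix j assume j: "j < length ws"
  have sm1: "strict_mono_on {..<k\<^sub>1} (\<pi>\<^sub>1 j)" and lt1: "\<forall>i<k\<^sub>1. \<pi>\<^sub>1 j i < length (us ! j)"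
    and sm2: "strict_mono_on {..<k\<^sub>2} (\<pi>\<^sub>2 j)" and lt2: "\<forall>i<k\<^sub>2. \<pi>\<^sub>2 j i < length (ws ! j)"
    using assms j unfolding alignments_def by auto
  show "strict_mono_on {..<k\<^sub>1 + k\<^sub>2} (align_append us k\<^sub>1 \<pi>\<^sub>1 \<pi>\<^sub>2 j) \<and>
        (\<forall>i<k\<^sub>1 + k\<^sub>2. align_append us k\<^sub>1 \<pi>\<^sub>1 \<pi>\<^sub>2 j i < length (us ! j) + length (ws ! j))"
  proof
    show "strict_mono_on {..<k\<^sub>1 + k\<^sub>2} (align_append us k\<^sub>1 \<pi>\<^sub>1 \<pi>\<^sub>2 j)"
    proof (rule strict_mono_onI)
      fix r s assume "r \<in> {..<k\<^sub>1 + k\<^sub>2}" "s \<in> {..<k\<^sub>1 + k\<^sub>2}" "r < s"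
      then show "align_append us k\<^sub>1 \<pi>\<^sub>1 \<pi>\<^sub>2 j r < align_append us k\<^sub>1 \<pi>\<^sub>1 \<pi>\<^sub>2 j s"
        using sm1 sm2 lt1 unfolding align_append_def strict_mono_on_def
        by (auto simp: less_diff_conv2 trans_less_add1)
    qed
    show "\<forall>i<k\<^sub>1 + k\<^sub>2. align_append us k\<^sub>1 \<pi>\<^sub>1 \<pi>\<^sub>2 j i < length (us ! j) + length (ws ! j)"
      using lt1 lt2 unfolding align_append_def by (auto simp: trans_less_add1)
  qed
qed

lemma align_score_append:
  assumes "(k\<^sub>1, \<pi>\<^sub>1) \<in> alignments us" "(k\<^sub>2, \<pi>\<^sub>2) \<in> alignments ws" "length us = length ws"
  shows "align_score S (map2 (@) us ws) (k\<^sub>1 + k\<^sub>2) (align_append us k\<^sub>1 \<pi>\<^sub>1 \<pi>\<^sub>2)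
       = align_score S us k\<^sub>1 \<pi>\<^sub>1 + align_score S ws k\<^sub>2 \<pi>\<^sub>2"
proof -
  have nth: "map2 (@) us ws ! j = us ! j @ ws ! j" if "j < length ws" for j
    using that assms(3) by simp
  have "\<pi>\<^sub>1 j i < length (us ! j)" if "j < length ws" "i < k\<^sub>1" for i j
    using assms that unfolding alignments_def by auto
  then show ?thesis
    using assms(3) unfolding align_score_def sum_lessThan_add_split
    by (auto simp: align_append_def nth nth_append intro!: sum.cong arg_cong[where f = S] arg_cong2[where f = "(+)"])
qed

locale alignment_score =
  fixes A :: "real set" and m :: nat and S :: "real list \<Rightarrow> real"
  assumes m_pos: "0 < m"
    and S_bdd: "bdd_above (S ` {x. length x = m \<and> set x \<subseteq> A})"
begin

definition words :: "real list list \<Rightarrow> bool" where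
  "words ws \<longleftrightarrow> length ws = m \<and> (\<forall>w\<in>set ws. set w \<subseteq> A)"

definition S_sup :: real where
  "S_sup = Sup (insert 0 (S ` {x. length x = m \<and> set x \<subseteq> A}))"

lemma S_sup_nonneg: "0 \<le> S_sup"
  unfolding S_sup_def using S_bdd by (intro cSup_upper) auto

lemma S_le_S_sup: "length x = m \<Longrightarrow> set x \<subseteq> A \<Longrightarrow> S x \<le> S_sup"
  unfolding S_sup_def using S_bdd by (intro cSup_upper) auto

lemma words_append: "words us \<Longrightarrow> words ws \<Longrightarrow> words (map2 (@) us ws)"
  unfolding words_def by (auto simp: set_zip)

lemma alignment_column_in:
  assumes "words ws" "(k, \<pi>) \<in> alignments ws" "i < k"
  shows "set (map (\<lambda>j. ws ! j ! \<pi> j i) [0..<m]) \<subseteq> A"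
proof -
  have len: "length ws = m" using assms(1) unfolding words_def by simp
  have "ws ! j ! \<pi> j i \<in> A" if "j < m" for j
  proof -
    have "ws ! j ! \<pi> j i \<in> set (ws ! j)" using assms(2,3) that len unfolding alignments_def by auto
    moreover have "ws ! j \<in> set ws" using that len by simp
    ultimately show ?thesis using assms(1) unfolding words_def by blast
  qed
  then show ?thesis by auto
qed

lemma align_score_le:
  assumes "words ws" "(k, \<pi>) \<in> alignments ws"
  shows "align_score S ws k \<pi> \<le> real k * S_sup"
proof -
  have "length ws = m" using assms(1) unfolding words_def by simp
  moreover have "S (map (\<lambda>j. ws ! j ! \<pi> j i) [0..<m]) \<le> S_sup" if "i < k" for i
    using alignment_column_in[OF assms that] S_le_S_sup by simp
  ultimately show ?thesis
    unfolding align_score_def using sum_bounded_above[of "{..<k}" _ S_sup] by simp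
qed

lemma align_score_le_length:
  assumes "words ws" "(k, \<pi>) \<in> alignments ws" "j < m"
  shows "align_score S ws k \<pi> \<le> S_sup * real (length (ws ! j))"
proof -
  have "k \<le> length (ws ! j)"
    using alignment_length_le assms unfolding words_def by auto
  then have "real k * S_sup \<le> real (length (ws ! j)) * S_sup"
    using S_sup_nonneg by (intro mult_right_mono) auto
  then show ?thesis
    using align_score_le[OF assms(1,2)] by (simp add: mult.commute)
qed

lemma opt_score_bdd:
  "words ws \<Longrightarrow> bdd_above ((\<lambda>a. align_score S ws (fst a) (snd a)) ` alignments ws)"
  using align_score_le_length[of ws _ _ 0] m_pos by (intro bdd_aboveI2) force

lemma align_score_le_opt_score:
  "words ws \<Longrightarrow> (k, \<pi>) \<in> alignments ws \<Longrightarrow> align_score S ws k \<pi> \<le> opt_score S ws"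
  unfolding opt_score_def using cSUP_upper[OF _ opt_score_bdd] by fastforce

lemma opt_score_nonneg: "words ws \<Longrightarrow> 0 \<le> opt_score S ws"
  using align_score_le_opt_score[OF _ empty_alignment] by (simp add: align_score_def)

lemma opt_score_le_length:
  "words ws \<Longrightarrow> j < m \<Longrightarrow> opt_score S ws \<le> S_sup * real (length (ws ! j))"
  unfolding opt_score_def using empty_alignment align_score_le_length
  by (intro cSUP_least) fastforce+

lemma opt_score_least:
  assumes "\<And>k \<pi>. (k, \<pi>) \<in> alignments ws \<Longrightarrow> align_score S ws k \<pi> \<le> c"
  shows "opt_score S ws \<le> c"
  unfolding opt_score_def using empty_alignment assms by (intro cSUP_least) fastforce+

lemma opt_score_append:
  assumes us: "words us" and ws: "words ws"
  shows "opt_score S us + opt_score S ws \<le> opt_score S (map2 (@) us ws)"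
proof -
  have len: "length us = length ws" using us ws unfolding words_def by simp
  have "align_score S us k\<^sub>1 \<pi>\<^sub>1 + align_score S ws k\<^sub>2 \<pi>\<^sub>2 \<le> opt_score S (map2 (@) us ws)"
    if "(k\<^sub>1, \<pi>\<^sub>1) \<in> alignments us" "(k\<^sub>2, \<pi>\<^sub>2) \<in> alignments ws" for k\<^sub>1 \<pi>\<^sub>1 k\<^sub>2 \<pi>\<^sub>2
    using align_score_le_opt_score[OF words_append[OF us ws] alignments_append[OF that len]]
      align_score_append[OF that len] by simp
  then have "opt_score S us \<le> opt_score S (map2 (@) us ws) - align_score S ws k\<^sub>2 \<pi>\<^sub>2"
    if "(k\<^sub>2, \<pi>\<^sub>2) \<in> alignments ws" for k\<^sub>2 \<pi>\<^sub>2
    using that by (intro opt_score_least) (simp add: algebra_simps)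
  then have "opt_score S ws \<le> opt_score S (map2 (@) us ws) - opt_score S us"
    by (intro opt_score_least) (simp add: algebra_simps)
  then show ?thesis by simp
qed

end

locale symmetric_alignment_score = alignment_score +
  assumes S_sym: "\<forall>x \<sigma>. length x = m \<and> set x \<subseteq> A \<and> \<sigma> permutes {..<m}
                   \<longrightarrow> S (permute_list \<sigma> x) = S x"
begin

lemma opt_score_le_permute:
  assumes ws: "words ws" and \<sigma>: "\<sigma> permutes {..<m}"
  shows "opt_score S ws \<le> opt_score S (permute_list \<sigma> ws)"
proof (rule opt_score_least)
  fix k \<pi> assume al: "(k, \<pi>) \<in> alignments ws"
  have len: "length ws = m" using ws unfolding words_def by simp
  have \<sigma>_lt: "\<sigma> j < m" if "j < m" for j using permutes_in_image[OF \<sigma>] that by simp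
  have nth: "permute_list \<sigma> ws ! j = ws ! \<sigma> j" if "j < m" for j
    using permute_list_nth[of \<sigma> ws j] \<sigma> len that by simp
  have al\<sigma>: "(k, \<lambda>j. \<pi> (\<sigma> j)) \<in> alignments (permute_list \<sigma> ws)"
    using al \<sigma>_lt unfolding alignments_def len length_permute_list by (simp add: nth)
  have "align_score S (permute_list \<sigma> ws) k (\<lambda>j. \<pi> (\<sigma> j)) = align_score S ws k \<pi>"
    unfolding align_score_def length_permute_list len
  proof (rule sum.cong[OF refl])
    fix i assume "i \<in> {..<k}"
    then have "set (map (\<lambda>j. ws ! j ! \<pi> j i) [0..<m]) \<subseteq> A"
      using alignment_column_in[OF ws al] by simp
    moreover have "map (\<lambda>j. permute_list \<sigma> ws ! j ! \<pi> (\<sigma> j) i) [0..<m]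
        = permute_list \<sigma> (map (\<lambda>j. ws ! j ! \<pi> j i) [0..<m])"
      using \<sigma>_lt by (simp add: permute_list_def len)
    ultimately show "S (map (\<lambda>j. permute_list \<sigma> ws ! j ! \<pi> (\<sigma> j) i) [0..<m])
        = S (map (\<lambda>j. ws ! j ! \<pi> j i) [0..<m])"
      using S_sym \<sigma> by simp
  qed
  moreover have "words (permute_list \<sigma> ws)" using ws \<sigma> len unfolding words_def by simp
  ultimately show "align_score S ws k \<pi> \<le> opt_score S (permute_list \<sigma> ws)"
    using align_score_le_opt_score[OF _ al\<sigma>] by simp
qed

lemma opt_score_permute:
  assumes ws: "words ws" and \<sigma>: "\<sigma> permutes {..<m}"
  shows "opt_score S (permute_list \<sigma> ws) = opt_score S ws"
proof -
  have len: "length ws = m" using ws unfolding words_def by simp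
  have "permute_list (inv \<sigma>) (permute_list \<sigma> ws) = ws"
    using permute_list_compose[of "inv \<sigma>" ws \<sigma>] permutes_inv[OF \<sigma>] permutes_inv_o(1)[OF \<sigma>] len
    by simp
  moreover have "words (permute_list \<sigma> ws)" using ws \<sigma> len unfolding words_def by simp
  ultimately show ?thesis
    using opt_score_le_permute[OF _ permutes_inv[OF \<sigma>], of "permute_list \<sigma> ws"]
      opt_score_le_permute[OF ws \<sigma>] by simp
qed

end

section \<open>Superadditive sequences\<close>

lemma superadditive_div_le:
  fixes a :: "nat \<Rightarrow> real"
  assumes sup: "\<And>s t. a s + a t \<le> a (s + t)" and nonneg: "\<And>n. 0 \<le> a n"
  shows "real (n div q) * a q \<le> a n"
proof -
  have mult: "real k * a q \<le> a (k * q)" for k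
  proof (induction k)
    case (Suc k)
    then show ?case using sup[of "k * q" q] by (simp add: algebra_simps)
  qed (simp add: nonneg)
  have "real (n div q) * a q \<le> a (n div q * q) + a (n mod q)"
    using mult[of "n div q"] nonneg[of "n mod q"] by linarith
  also have "\<dots> \<le> a n"
    using sup[of "n div q * q" "n mod q"] by simp
  finally show ?thesis .
qed

lemma superadditive_ratio_lower:
  fixes a :: "nat \<Rightarrow> real"
  assumes sup: "\<And>s t. a s + a t \<le> a (s + t)" and nonneg: "\<And>n. 0 \<le> a n"
    and q: "1 \<le> q" and r: "0 < r" and n: "2 * a q / r + real q < real n"
  shows "a q / real q - r / 2 < a n / real n"
proof -
  have "0 \<le> 2 * a q / r" using nonneg[of q] r by simp
  then have npos: "0 < real n" using n q by linarith
  have "n < n div q * q + q"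
    using mod_less_divisor[of q n] q div_mult_mod_eq[of n q] by linarith
  then have "real n < real (n div q) * real q + real q"
    by (simp flip: of_nat_mult of_nat_add)
  then have "(real n - real q) / real q * a q \<le> real (n div q) * a q"
    using q nonneg[of q] by (intro mult_right_mono) (auto simp: divide_le_eq)
  also have "\<dots> \<le> a n" by (rule superadditive_div_le[where a = a, OF sup nonneg])
  finally have "(real n - real q) / real q * a q / real n \<le> a n / real n"
    using npos by (intro divide_right_mono) auto
  moreover have "(real n - real q) / real q * a q / real n = a q / real q - a q / real n"
    using npos q by (simp add: field_simps)
  moreover have "2 * a q / r < real n" using n by simp
  then have "2 * a q < real n * r" using r by (simp add: pos_divide_less_eq)
  then have "a q / real n < r / 2"
    using npos by (simp add: pos_divide_less_eq mult.commute)
  ultimately show ?thesis by linarith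
qed

lemma fekete_superadditive:
  fixes a :: "nat \<Rightarrow> real"
  assumes sup: "\<And>s t. a s + a t \<le> a (s + t)" and nonneg: "\<And>n. 0 \<le> a n"
    and bound: "\<And>n. a n \<le> C * real n"
  shows "\<exists>L. (\<lambda>n. a n / real n) \<longlonglongrightarrow> L \<and> (\<forall>n\<ge>1. a n / real n \<le> L)"
proof (intro exI conjI)
  define L where "L = (SUP n\<in>{1..}. a n / real n)"
  have bdd: "bdd_above ((\<lambda>n. a n / real n) ` {1..})"
    using bound by (intro bdd_aboveI2[of _ _ C]) (simp add: divide_le_eq mult.commute)
  show upper: "\<forall>n\<ge>1. a n / real n \<le> L"
    unfolding L_def using bdd by (auto intro: cSUP_upper)
  show "(\<lambda>n. a n / real n) \<longlonglongrightarrow> L"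
  proof (rule LIMSEQ_I)
    fix r :: real assume r: "0 < r"
    then obtain q where q: "1 \<le> q" "L - r / 2 < a q / real q"
      using less_cSUP_iff[OF _ bdd, of "L - r / 2"] unfolding L_def by auto
    have "norm (a n / real n - L) < r" if "nat \<lceil>2 * a q / r + real q\<rceil> < n" for n
    proof -
      have "2 * a q / r + real q < real n"
        using that real_nat_ceiling_ge[of "2 * a q / r + real q"] by linarith
      then have "L - r < a n / real n"
        using superadditive_ratio_lower[where a = a, OF sup nonneg q(1) r] q(2) by fastforce
      then show ?thesis using upper that by fastforce
    qed
    then show "\<exists>N. \<forall>n\<ge>N. norm (a n / real n - L) < r"
      by (meson Suc_le_eq)
  qed
qed

lemma tendsto_div_nat_ratio:
  assumes v: "0 < v"
  shows "(\<lambda>n. real (n div v + k) / real n) \<longlonglongrightarrow> 1 / real v"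
proof (rule tendsto_sandwich)
  have "n < (n div v + 1) * v" for n
    using div_mult_mod_eq[of n v] mod_less_divisor[OF v, of n]
    by (simp only: add_mult_distrib mult_1_left)
  then have lo: "real n / real v - 1 < real (n div v)" for n
    using v by (simp add: field_simps flip: of_nat_mult of_nat_add)
  have hi: "real (n div v) \<le> real n / real v" for n
    using v by (simp add: le_divide_eq flip: of_nat_mult)
  show "\<forall>\<^sub>F n in sequentially. 1 / real v - 1 / real n \<le> real (n div v + k) / real n"
  proof (rule eventually_sequentiallyI[of 1])
    fix n :: nat assume "1 \<le> n"
    then have "(real n / real v - 1) / real n \<le> real (n div v + k) / real n"
      using lo[of n] by (intro divide_right_mono) auto
    then show "1 / real v - 1 / real n \<le> real (n div v + k) / real n"
      using \<open>1 \<le> n\<close> by (simp add: diff_divide_distrib)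
  qed
  show "\<forall>\<^sub>F n in sequentially. real (n div v + k) / real n \<le> 1 / real v + real k / real n"
  proof (rule eventually_sequentiallyI[of 1])
    fix n :: nat assume "1 \<le> n"
    then have "real (n div v + k) / real n \<le> (real n / real v + real k) / real n"
      using hi[of n] by (intro divide_right_mono) auto
    then show "real (n div v + k) / real n \<le> 1 / real v + real k / real n"
      using \<open>1 \<le> n\<close> by (simp add: add_divide_distrib)
  qed
  show "(\<lambda>n. 1 / real v - 1 / real n) \<longlonglongrightarrow> 1 / real v"
    using tendsto_diff[OF tendsto_const lim_const_over_n[of 1]] by simp
  show "(\<lambda>n. 1 / real v + real k / real n) \<longlonglongrightarrow> 1 / real v"
    using tendsto_add[OF tendsto_const lim_const_over_n[of "real k"]] by simp
qed

lemma tendsto_div_nat_sandwich: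
  fixes h g :: "nat \<Rightarrow> real"
  assumes v: "0 < v" and h: "(\<lambda>t. h t / real t) \<longlonglongrightarrow> H" and h0: "h 0 = 0"
    and bounds: "\<And>n. 1 \<le> n \<Longrightarrow> h (n div v) / real n \<le> g n \<and> g n \<le> h (n div v + 1) / real n"
  shows "g \<longlonglongrightarrow> H / real v"
proof (rule tendsto_sandwich)
  have split: "h (n div v + k) / real n = h (n div v + k) / real (n div v + k) * (real (n div v + k) / real n)"
    for n k
    by (cases "n div v + k = 0") (simp_all add: h0 flip: of_nat_add)
  have lim: "(\<lambda>n. h (n div v + k) / real (n div v + k)) \<longlonglongrightarrow> H" for k
    by (rule filterlim_compose[OF h filterlim_compose[OF filterlim_add_const_nat_at_top
          filterlim_at_top_div_const_nat[OF v]]])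
  have lim_k: "(\<lambda>n. h (n div v + k) / real n) \<longlonglongrightarrow> H * (1 / real v)" for k
    unfolding split by (rule tendsto_mult[OF lim tendsto_div_nat_ratio[OF v]])
  from lim_k[of 0] lim_k[of 1] show "(\<lambda>n. h (n div v + 0) / real n) \<longlonglongrightarrow> H / real v"
    and "(\<lambda>n. h (n div v + 1) / real n) \<longlonglongrightarrow> H / real v" by simp_all
  show "\<forall>\<^sub>F n in sequentially. h (n div v + 0) / real n \<le> g n"
    and "\<forall>\<^sub>F n in sequentially. g n \<le> h (n div v + 1) / real n"
    using bounds by (auto intro: eventually_sequentiallyI[of 1])
qed

section \<open>Words cut from the sequences\<close>

definition block :: "(nat \<Rightarrow> nat \<Rightarrow> 'w \<Rightarrow> real) \<Rightarrow> nat \<Rightarrow> (nat \<Rightarrow> nat) \<Rightarrow> (nat \<Rightarrow> nat)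
    \<Rightarrow> (nat \<Rightarrow> nat) \<Rightarrow> 'w \<Rightarrow> real list list" where
  "block X m s off len \<omega> = map (\<lambda>j. map (\<lambda>i. X (s j) (off j + i + 1) \<omega>) [0..<len j]) [0..<m]"

lemma block_cong: "(\<And>j. j < m \<Longrightarrow> len j = len' j) \<Longrightarrow> block X m s off len \<omega> = block X m s off len' \<omega>"
  unfolding block_def by simp

lemma length_block_nth: "j < m \<Longrightarrow> length (block X m s off len \<omega> ! j) = len j"
  unfolding block_def by simp

lemma map_upt_add:
  fixes a b :: nat
  shows "map f [0..<a + b] = map f [0..<a] @ map (\<lambda>i. f (a + i)) [0..<b]"
  by (induction b) auto

lemma block_append:
  "block X m s off (\<lambda>j. l\<^sub>1 j + l\<^sub>2 j) \<omega>
     = map2 (@) (block X m s off l\<^sub>1 \<omega>) (block X m s (\<lambda>j. off j + l\<^sub>1 j) l\<^sub>2 \<omega>)"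
  unfolding block_def map2_map_map by (simp add: map_upt_add add_ac)

lemma plen_bounds:
  fixes len :: "nat \<Rightarrow> nat"
  assumes v: "0 < len 0"
  defines "p \<equiv> \<lambda>j. real (len (j - 1)) / real (len 0)"
  shows "n div len 0 * len j \<le> plen p n (Suc j)" and "plen p n (Suc j) \<le> (n div len 0 + 1) * len j"
proof -
  let ?v = "real (len 0)" and ?t = "real (n div len 0)"
  define x where "x = real n * real (len j) / ?v"
  have plen: "plen p n (Suc j) = nat \<lceil>x\<rceil>"
    using v unfolding plen_def p_def x_def by auto
  have "n div len 0 * len 0 \<le> n" by simp
  then have "?t * ?v \<le> real n" by (simp flip: of_nat_mult)
  then have "?t * ?v * real (len j) / ?v \<le> x"
    unfolding x_def using v by (intro divide_right_mono mult_right_mono) auto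
  then have "real (n div len 0 * len j) \<le> real (nat \<lceil>x\<rceil>)"
    using v real_nat_ceiling_ge[of x] by simp
  then show "n div len 0 * len j \<le> plen p n (Suc j)"
    unfolding plen by (simp only: of_nat_le_iff)
  have "n \<le> (n div len 0 + 1) * len 0"
    using div_mult_mod_eq[of n "len 0"] mod_less_divisor[OF v, of n]
    by (simp only: add_mult_distrib mult_1_left)
  then have "real n \<le> real ((n div len 0 + 1) * len 0)" by (simp only: of_nat_le_iff)
  then have "real n \<le> (?t + 1) * ?v" by (simp add: algebra_simps)
  then have "x \<le> (?t + 1) * ?v * real (len j) / ?v"
    unfolding x_def using v by (intro divide_right_mono mult_right_mono) auto
  then have "x \<le> (?t + 1) * real (len j)" using v by simp
  then show "plen p n (Suc j) \<le> (n div len 0 + 1) * len j"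
    unfolding plen using v by (simp add: algebra_simps)
qed

lemma sum_length_ratios:
  fixes len :: "nat \<Rightarrow> nat"
  assumes "0 < m" "0 < len 0"
  shows "1 + (\<Sum>i=2..m. real (len (i - 1)) / real (len 0)) = real (\<Sum>j<m. len j) / real (len 0)"
proof -
  obtain m' where m': "m = Suc m'" using assms(1) gr0_implies_Suc by blast
  have "(\<Sum>i=2..m. real (len (i - 1))) = (\<Sum>k<m'. real (len (Suc k)))"
    unfolding m' numeral_2_eq_2 sum.atLeast_Suc_atMost_Suc_shift sum.atLeast1_atMost_eq by simp
  moreover have "real (\<Sum>j<m. len j) = real (len 0) + (\<Sum>k<m'. real (len (Suc k)))"
    unfolding m' sum.lessThan_Suc_shift by simp
  ultimately show ?thesis
    using assms(2) by (simp add: field_simps flip: sum_divide_distrib)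
qed

text \<open>The \<open>k\<close>-th block of \<open>L(r)\<close>. Rows are 0-based, so row \<open>j\<close> reads sequence \<open>j + 1\<close>
  and is governed by \<open>r (j + 1)\<close>.\<close>

definition block_offsets :: "nat \<Rightarrow> (nat \<Rightarrow> nat \<Rightarrow> nat) \<Rightarrow> nat \<Rightarrow> nat \<Rightarrow> nat" where
  "block_offsets v r k j = (if j = 0 then v * (k - 1) else r (Suc j) (k - 1))"

definition block_lengths :: "nat \<Rightarrow> (nat \<Rightarrow> nat \<Rightarrow> nat) \<Rightarrow> nat \<Rightarrow> nat \<Rightarrow> nat" where
  "block_lengths v r k j = (if j = 0 then v else r (Suc j) k - r (Suc j) (k - 1))"

definition in_window :: "nat \<Rightarrow> nat \<Rightarrow> (nat \<Rightarrow> real) \<Rightarrow> (nat \<Rightarrow> real) \<Rightarrow> (nat \<Rightarrow> nat \<Rightarrow> nat) \<Rightarrow> nat \<Rightarrow> bool"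
  where "in_window m v p1 p2 r k \<longleftrightarrow> (\<forall>j\<in>{2..m}.
    real v * p1 j \<le> real (r j k - r j (k - 1)) \<and> real (r j k - r j (k - 1)) \<le> real v * p2 j)"

lemma card_diff_gt:
  assumes "G \<subseteq> {1..d}" "real (card G) < (1 - \<epsilon>) * real d"
  shows "\<epsilon> * real d < real (card ({1..d} - G))"
proof -
  have "card G \<le> d" using card_mono[of "{1..d}" G] assms(1) by simp
  then have "real (card ({1..d} - G)) = real d - real (card G)"
    using assms(1) by (simp add: card_Diff_subset finite_subset)
  then show ?thesis using assms(2) by (simp add: algebra_simps)
qed

lemma seg_eq_map: "seg X j a b \<omega> = map (\<lambda>i. X j (a + i + 1) \<omega>) [0..<b - a]"
proof (cases "a \<le> b")
  case True
  then have "b - a + (a + 1) = b + 1" by simp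
  then have "[a + 1..<b + 1] = map (\<lambda>i. i + (a + 1)) [0..<b - a]" by (simp only: map_add_upt)
  then show ?thesis unfolding seg_def by (simp add: add_ac)
qed (simp add: seg_def)

lemma segments_eq_block:
  "map (\<lambda>j. seg X j 0 (len j) \<omega>) [1..<m + 1] = block X m Suc (\<lambda>_. 0) (\<lambda>j. len (Suc j)) \<omega>"
proof -
  have "[1..<m + 1] = map Suc [0..<m]" using map_Suc_upt[of 0 m] by simp
  then show ?thesis unfolding block_def seg_eq_map by simp
qed

lemma Ln_eq_block: "Ln S m X n \<omega> = opt_score S (block X m Suc (\<lambda>_. 0) (\<lambda>_. n) \<omega>)"
  unfolding Ln_def segments_eq_block ..

lemma sum_telescope_nat:
  fixes f :: "nat \<Rightarrow> nat"
  assumes "\<And>k. k < d \<Longrightarrow> f k \<le> f (Suc k)"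
  shows "(\<Sum>k=1..d. f k - f (k - 1)) = f d - f 0"
proof -
  have "f (k - 1) \<le> f k" if "k \<in> {1..d}" for k
  proof -
    from that have "k - 1 < d" "Suc (k - 1) = k" by auto
    then show ?thesis using assms[of "k - 1"] by simp
  qed
  then have "int (\<Sum>k=1..d. f k - f (k - 1)) = (\<Sum>k\<in>{Suc 0..d}. int (f k) - int (f (k - 1)))"
    by simp
  also have "\<dots> = int (f d) - int (f 0)"
    using sum_telescope''[of 0 d "\<lambda>k. int (f k)"] by simp
  finally show ?thesis by linarith
qed

lemma L_r_eq_blocks:
  assumes "0 < m"
  shows "L_r S m X v d r \<omega>
    = (\<Sum>k=1..d. opt_score S (block X m Suc (block_offsets v r k) (block_lengths v r k) \<omega>))"
proof -
  have rows: "[0..<m] = 0 # [1..<m]" "[2..<m + 1] = map Suc [1..<m]"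
    using assms map_Suc_upt[of 1 m] by (simp_all add: upt_rec numeral_2_eq_2)
  have "v * k - v * (k - 1) = v" if "1 \<le> k" for k
    using that by (simp add: diff_mult_distrib2)
  then have "seg X 1 (v * (k - 1)) (v * k) \<omega> # map (\<lambda>j. seg X j (r j (k - 1)) (r j k) \<omega>) [2..<m + 1]
      = block X m Suc (block_offsets v r k) (block_lengths v r k) \<omega>" if "1 \<le> k" for k
    using that unfolding block_def rows seg_eq_map by (simp add: block_offsets_def block_lengths_def)
  then show ?thesis unfolding L_r_def by (intro sum.cong) auto
qed

lemma sum_block_lengths:
  assumes "admissible_r m v d r"
  shows "(\<Sum>k=1..d. \<Sum>j<m. block_lengths v r k j) = m * (v * d)"
proof -
  have "(\<Sum>k=1..d. block_lengths v r k j) = v * d" if "j < m" for j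
  proof (cases "j = 0")
    case False
    then have "Suc j \<in> {2..m}" using that by auto
    then have "r (Suc j) 0 = 0" "r (Suc j) d = v * d" "\<forall>k<d. r (Suc j) k \<le> r (Suc j) (Suc k)"
      using assms unfolding admissible_r_def by auto
    moreover from this(3) have "(\<Sum>k=1..d. r (Suc j) k - r (Suc j) (k - 1)) = r (Suc j) d - r (Suc j) 0"
      by (intro sum_telescope_nat) auto
    ultimately show ?thesis using False unfolding block_lengths_def by simp
  qed (simp add: block_lengths_def)
  then show ?thesis by (subst sum.swap) simp
qed

section \<open>An i.i.d. array of letters\<close>

locale iid_array = prob_space M for M :: "'w measure" +
  fixes A :: "real set" and m :: nat and X :: "nat \<Rightarrow> nat \<Rightarrow> 'w \<Rightarrow> real"
  assumes finite_A: "finite A"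
    and X_meas: "\<forall>j\<in>{1..m}. \<forall>i\<ge>1. X j i \<in> borel_measurable M"
    and X_vals: "\<forall>j\<in>{1..m}. \<forall>i\<ge>1. \<forall>\<omega>\<in>space M. X j i \<omega> \<in> A"
    and X_indep: "indep_vars (\<lambda>_. borel) (\<lambda>(j, i). X j i) ({1..m} \<times> {1..})"
    and X_ident: "\<forall>j\<in>{1..m}. \<forall>i\<ge>1. distr M borel (X j i) = distr M borel (X 1 1)"
begin

definition letter_prob :: "real \<Rightarrow> real" where
  "letter_prob c = prob {\<omega> \<in> space M. X 1 1 \<omega> = c}"

lemma prob_letter_eq:
  assumes "j \<in> {1..m}" "1 \<le> i"
  shows "prob (X j i -` {c} \<inter> space M) = letter_prob c"
proof -
  have one: "1 \<in> {1..m}" using assms(1) by simp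
  have "prob (X j i -` {c} \<inter> space M) = measure (distr M borel (X j i)) {c}"
    using X_meas assms by (subst measure_distr) auto
  also have "\<dots> = measure (distr M borel (X 1 1)) {c}"
    using X_ident assms by metis
  also have "\<dots> = prob (X 1 1 -` {c} \<inter> space M)"
    using X_meas one by (subst measure_distr) auto
  also have "X 1 1 -` {c} \<inter> space M = {\<omega> \<in> space M. X 1 1 \<omega> = c}"
    by blast
  finally show ?thesis
    unfolding letter_prob_def .
qed

definition sample :: "('i \<Rightarrow> nat \<times> nat) \<Rightarrow> 'i set \<Rightarrow> 'w \<Rightarrow> 'i \<Rightarrow> real" where
  "sample \<phi> I \<omega> = (\<lambda>x\<in>I. case_prod X (\<phi> x) \<omega>)"

lemma sample_eq_iff:
  assumes "a \<in> extensional I"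
  shows "sample \<phi> I \<omega> = a \<longleftrightarrow> (\<forall>x\<in>I. case_prod X (\<phi> x) \<omega> = a x)"
proof
  show "sample \<phi> I \<omega> = a \<Longrightarrow> \<forall>x\<in>I. case_prod X (\<phi> x) \<omega> = a x"
    unfolding sample_def by auto
  show "\<forall>x\<in>I. case_prod X (\<phi> x) \<omega> = a x \<Longrightarrow> sample \<phi> I \<omega> = a"
    unfolding sample_def using assms by (intro extensionalityI[where A = I]) auto
qed

lemma sample_in_PiE:
  assumes "\<omega> \<in> space M" "\<phi> ` I \<subseteq> {1..m} \<times> {1..}"
  shows "sample \<phi> I \<omega> \<in> PiE I (\<lambda>_. A)"
proof -
  have "case_prod X (\<phi> x) \<omega> \<in> A" if "x \<in> I" for x
    using assms X_vals that by (auto simp: case_prod_beta mem_Times_iff)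
  then show ?thesis unfolding sample_def by simp
qed

lemma sample_event:
  assumes "finite I" "\<phi> ` I \<subseteq> {1..m} \<times> {1..}" "a \<in> extensional I"
  shows "{\<omega> \<in> space M. sample \<phi> I \<omega> = a} \<in> events"
  unfolding sample_eq_iff[OF assms(3)]
proof (rule sets.sets_Collect_finite_All[OF _ assms(1)])
  fix x assume "x \<in> I"
  then have "fst (\<phi> x) \<in> {1..m}" "1 \<le> snd (\<phi> x)" using assms(2) by (auto simp: mem_Times_iff)
  then have "case_prod X (\<phi> x) \<in> borel_measurable M" using X_meas by (simp add: case_prod_beta')
  then show "{\<omega> \<in> space M. case_prod X (\<phi> x) \<omega> = a x} \<in> events" by measurable
qed

lemma prob_sample_eq:
  assumes fin: "finite I" and inj: "inj_on \<phi> I" and rng: "\<phi> ` I \<subseteq> {1..m} \<times> {1..}"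
    and a: "a \<in> extensional I"
  shows "prob {\<omega> \<in> space M. sample \<phi> I \<omega> = a} = (\<Prod>x\<in>I. letter_prob (a x))"
proof (cases "I = {}")
  case True
  then show ?thesis using a by (simp add: sample_def restrict_def prob_space)
next
  case False
  define F where "F y = case_prod X y -` {a (inv_into I \<phi> y)} \<inter> space M" for y
  have F\<phi>: "F (\<phi> x) = case_prod X (\<phi> x) -` {a x} \<inter> space M" if "x \<in> I" for x
    unfolding F_def using inv_into_f_f[OF inj that] by simp
  have "{\<omega> \<in> space M. sample \<phi> I \<omega> = a} = (\<Inter>x\<in>I. F (\<phi> x))"
    using False by (auto simp: sample_eq_iff[OF a] F\<phi>)
  also have "\<dots> = (\<Inter>y\<in>\<phi> ` I. F y)" by simp
  also have "prob \<dots> = (\<Prod>y\<in>\<phi> ` I. prob (F y))"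
  proof (rule indep_setsD)
    show "indep_sets (\<lambda>y. {case_prod X y -` B \<inter> space M | B. B \<in> sets borel}) ({1..m} \<times> {1..})"
      using X_indep unfolding indep_vars_def2 by (simp only:)
    show "\<forall>y\<in>\<phi> ` I. F y \<in> {case_prod X y -` B \<inter> space M | B. B \<in> sets borel}"
      unfolding F_def by (intro ballI CollectI exI[of _ "{a (inv_into I \<phi> y)}" for y]) simp
  qed (use False fin rng in auto)
  also have "\<dots> = (\<Prod>x\<in>I. prob (F (\<phi> x)))" by (simp add: prod.reindex[OF inj])
  also have "\<dots> = (\<Prod>x\<in>I. letter_prob (a x))"
  proof (rule prod.cong[OF refl])
    fix x assume x: "x \<in> I"
    then have "fst (\<phi> x) \<in> {1..m}" "1 \<le> snd (\<phi> x)" using rng by (auto simp: mem_Times_iff)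
    then show "prob (F (\<phi> x)) = letter_prob (a x)"
      using prob_letter_eq F\<phi>[OF x] by (simp add: case_prod_beta)
  qed
  finally show ?thesis .
qed

lemma integral_sample:
  fixes G :: "('i \<Rightarrow> real) \<Rightarrow> real"
  assumes fin: "finite I" and inj: "inj_on \<phi> I" and rng: "\<phi> ` I \<subseteq> {1..m} \<times> {1..}"
  shows "integrable M (\<lambda>\<omega>. G (sample \<phi> I \<omega>))"
    and "(\<integral>\<omega>. G (sample \<phi> I \<omega>) \<partial>M) = (\<Sum>a\<in>PiE I (\<lambda>_. A). G a * (\<Prod>x\<in>I. letter_prob (a x)))"
proof -
  define P where "P = PiE I (\<lambda>_. A)"
  define E where "E a = {\<omega> \<in> space M. sample \<phi> I \<omega> = a}" for a
  have E: "E a \<in> events" if "a \<in> P" for a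
    unfolding E_def using sample_event[OF fin rng] that by (simp add: P_def PiE_def)
  have "finite P" unfolding P_def using fin finite_A by (simp add: finite_PiE)
  then have decomp: "G (sample \<phi> I \<omega>) = (\<Sum>a\<in>P. G a * indicator (E a) \<omega>)" if "\<omega> \<in> space M" for \<omega>
    using sample_in_PiE[OF that rng] that
    by (simp add: E_def indicator_def if_distrib[of "(*) _"] eq_commute[of _ "sample \<phi> I \<omega>"] P_def)
  have ind: "integrable M (\<lambda>\<omega>. G a * indicator (E a) \<omega>)" if "a \<in> P" for a
    using E[OF that] by (intro integrable_mult_right integrable_real_indicator) (auto simp: less_top[symmetric])
  show "integrable M (\<lambda>\<omega>. G (sample \<phi> I \<omega>))"
    using ind by (subst Bochner_Integration.integrable_cong[OF refl decomp]) auto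
  have "(\<integral>\<omega>. G (sample \<phi> I \<omega>) \<partial>M) = (\<integral>\<omega>. (\<Sum>a\<in>P. G a * indicator (E a) \<omega>) \<partial>M)"
    using decomp by (intro Bochner_Integration.integral_cong) auto
  also have "\<dots> = (\<Sum>a\<in>P. G a * prob (E a))"
    using ind E by (simp add: integral_sum)
  also have "\<dots> = (\<Sum>a\<in>P. G a * (\<Prod>x\<in>I. letter_prob (a x)))"
    unfolding E_def using prob_sample_eq[OF fin inj rng] by (intro sum.cong) (auto simp: P_def PiE_def)
  finally show "(\<integral>\<omega>. G (sample \<phi> I \<omega>) \<partial>M) = (\<Sum>a\<in>PiE I (\<lambda>_. A). G a * (\<Prod>x\<in>I. letter_prob (a x)))"
    unfolding P_def .
qed

end

section \<open>Expected scores of blocks\<close>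

lemma bij_betw_add_mod: "bij_betw (\<lambda>i. (c + i) mod m) {..<m} {..<m :: nat}"
proof -
  have inj: "inj_on (\<lambda>i. (c + i) mod m) {..<m}"
  proof (rule inj_onI)
    fix x y assume xy: "x \<in> {..<m}" "y \<in> {..<m}" and eq: "(c + x) mod m = (c + y) mod m"
    have "(int c + int x) mod int m = (int c + int y) mod int m"
      using eq by (metis of_nat_add zmod_int)
    then have "(int c + int x - int c) mod int m = (int c + int y - int c) mod int m"
      by (rule mod_diff_cong) simp
    then show "x = y" using xy by simp
  qed
  then have "(\<lambda>i. (c + i) mod m) ` {..<m} = {..<m}"
    by (intro endo_inj_surj) auto
  with inj show ?thesis unfolding bij_betw_def by simp
qed

lemma rotation_permutes: "(\<lambda>j. if j < m then (j + c) mod m else j) permutes {..<m :: nat}"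
proof (rule bij_imp_permutes)
  show "bij_betw (\<lambda>j. if j < m then (j + c) mod m else j) {..<m} {..<m}"
    using bij_betw_add_mod[of c m] by (rule bij_betw_cong[THEN iffD1, rotated]) (simp add: add.commute)
qed simp

locale lcs_model = iid_array M A m X + symmetric_alignment_score A m S
  for M :: "'w measure" and A m X S
begin

definition expected_score :: "(nat \<Rightarrow> nat) \<Rightarrow> real" where
  "expected_score len = (\<integral>\<omega>. opt_score S (block X m Suc (\<lambda>_. 0) len \<omega>) \<partial>M)"

lemma block_words:
  assumes "\<omega> \<in> space M" "s ` {..<m} \<subseteq> {1..m}"
  shows "words (block X m s off len \<omega>)"
proof -
  have "X (s j) (off j + i + 1) \<omega> \<in> A" if "j < m" for j i
    using assms X_vals that by (auto simp: image_subset_iff)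
  then show ?thesis unfolding words_def block_def by auto
qed

lemma block_integral_formula:
  fixes s off len :: "nat \<Rightarrow> nat"
  assumes inj: "inj_on s {..<m}" and rng: "s ` {..<m} \<subseteq> {1..m}"
  defines "I \<equiv> Sigma {..<m} (\<lambda>j. {..<len j})"
    and "G \<equiv> \<lambda>a. opt_score S (map (\<lambda>j. map (\<lambda>i. a (j, i)) [0..<len j]) [0..<m])"
  shows "integrable M (\<lambda>\<omega>. opt_score S (block X m s off len \<omega>))"
    and "(\<integral>\<omega>. opt_score S (block X m s off len \<omega>) \<partial>M)
       = (\<Sum>a\<in>PiE I (\<lambda>_. A). G a * (\<Prod>x\<in>I. letter_prob (a x)))"
proof -
  define \<phi> where "\<phi> = (\<lambda>(j, i). (s j, off j + i + 1))"
  have fin: "finite I" unfolding I_def by auto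
  have inj\<phi>: "inj_on \<phi> I"
    using inj unfolding inj_on_def \<phi>_def I_def by (auto, metis lessThan_iff add_left_cancel)
  have rng\<phi>: "\<phi> ` I \<subseteq> {1..m} \<times> {1..}"
    using rng unfolding \<phi>_def I_def by auto
  have "G (sample \<phi> I \<omega>) = opt_score S (block X m s off len \<omega>)" for \<omega>
    unfolding G_def block_def sample_def by (auto simp: I_def \<phi>_def intro!: arg_cong[where f = "opt_score S"])
  then show "integrable M (\<lambda>\<omega>. opt_score S (block X m s off len \<omega>))"
    and "(\<integral>\<omega>. opt_score S (block X m s off len \<omega>) \<partial>M)
       = (\<Sum>a\<in>PiE I (\<lambda>_. A). G a * (\<Prod>x\<in>I. letter_prob (a x)))"
    using integral_sample[OF fin inj\<phi> rng\<phi>, of G] by simp_all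
qed

lemma integrable_block:
  "inj_on s {..<m} \<Longrightarrow> s ` {..<m} \<subseteq> {1..m} \<Longrightarrow> integrable M (\<lambda>\<omega>. opt_score S (block X m s off len \<omega>))"
  by (rule block_integral_formula)

text \<open>The expected optimal score of a block depends only on its lengths: the letters involved
  are distinct variables of the i.i.d. array, whatever sequences and positions they come from.\<close>

lemma integral_block:
  assumes "inj_on s {..<m}" "s ` {..<m} \<subseteq> {1..m}"
  shows "(\<integral>\<omega>. opt_score S (block X m s off len \<omega>) \<partial>M) = expected_score len"
  unfolding expected_score_def block_integral_formula(2)[OF assms]
  by (subst block_integral_formula(2)) auto

lemma Suc_block_rows: "inj_on Suc {..<m}" "Suc ` {..<m} \<subseteq> {1..m}"
  by auto

lemma integral_block_Suc: "(\<integral>\<omega>. opt_score S (block X m Suc off len \<omega>) \<partial>M) = expected_score len"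
  by (rule integral_block[OF Suc_block_rows])

lemma expected_score_nonneg: "0 \<le> expected_score len"
  unfolding expected_score_def
  by (intro integral_nonneg_AE AE_I2 opt_score_nonneg block_words Suc_block_rows)

lemma expected_score_le:
  assumes "j < m"
  shows "expected_score len \<le> S_sup * real (len j)"
proof -
  have "expected_score len \<le> (\<integral>\<omega>. S_sup * real (len j) \<partial>M)"
    unfolding expected_score_def
  proof (rule integral_mono[OF integrable_block[OF Suc_block_rows]])
    fix \<omega> assume "\<omega> \<in> space M"
    then show "opt_score S (block X m Suc (\<lambda>_. 0) len \<omega>) \<le> S_sup * real (len j)"
      using opt_score_le_length[OF block_words[OF _ Suc_block_rows(2)] assms, of \<omega> "\<lambda>_. 0" len]
        length_block_nth[OF assms, of X Suc "\<lambda>_. 0" len \<omega>] by simp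
  qed simp
  then show ?thesis by (simp add: prob_space)
qed

lemma expected_score_eq_0: "j < m \<Longrightarrow> len j = 0 \<Longrightarrow> expected_score len = 0"
  using expected_score_le[of j len] expected_score_nonneg[of len] by simp

lemma expected_score_cong:
  assumes "\<And>j. j < m \<Longrightarrow> len j = len' j"
  shows "expected_score len = expected_score len'"
proof -
  have "block X m Suc (\<lambda>_. 0) len \<omega> = block X m Suc (\<lambda>_. 0) len' \<omega>" for \<omega>
    by (rule block_cong) (rule assms)
  then show ?thesis unfolding expected_score_def by simp
qed

lemma expected_score_superadditive:
  "expected_score l\<^sub>1 + expected_score l\<^sub>2 \<le> expected_score (\<lambda>j. l\<^sub>1 j + l\<^sub>2 j)"
proof -
  let ?B\<^sub>1 = "block X m Suc (\<lambda>_. 0) l\<^sub>1" and ?B\<^sub>2 = "block X m Suc (\<lambda>j. 0 + l\<^sub>1 j) l\<^sub>2"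
  have int: "integrable M (\<lambda>\<omega>. opt_score S (?B\<^sub>1 \<omega>) + opt_score S (?B\<^sub>2 \<omega>))"
    using integrable_block[OF Suc_block_rows] by simp
  have "expected_score l\<^sub>1 + expected_score l\<^sub>2 = (\<integral>\<omega>. opt_score S (?B\<^sub>1 \<omega>) + opt_score S (?B\<^sub>2 \<omega>) \<partial>M)"
    using integral_block_Suc integrable_block[OF Suc_block_rows] by simp
  also have "\<dots> \<le> (\<integral>\<omega>. opt_score S (map2 (@) (?B\<^sub>1 \<omega>) (?B\<^sub>2 \<omega>)) \<partial>M)"
    using int integrable_block[OF Suc_block_rows, of "\<lambda>_. 0" "\<lambda>j. l\<^sub>1 j + l\<^sub>2 j"]
    by (intro integral_mono opt_score_append block_words Suc_block_rows) (simp_all add: block_append)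
  also have "\<dots> = expected_score (\<lambda>j. l\<^sub>1 j + l\<^sub>2 j)"
    by (simp add: block_append expected_score_def)
  finally show ?thesis .
qed

lemma expected_score_mono:
  assumes "\<And>j. j < m \<Longrightarrow> l\<^sub>1 j \<le> l\<^sub>2 j"
  shows "expected_score l\<^sub>1 \<le> expected_score l\<^sub>2"
proof -
  have "expected_score l\<^sub>1 \<le> expected_score l\<^sub>1 + expected_score (\<lambda>j. l\<^sub>2 j - l\<^sub>1 j)"
    using expected_score_nonneg by simp
  also have "\<dots> \<le> expected_score (\<lambda>j. l\<^sub>1 j + (l\<^sub>2 j - l\<^sub>1 j))"
    by (rule expected_score_superadditive)
  also have "\<dots> = expected_score l\<^sub>2"
    using assms by (intro expected_score_cong) simp
  finally show ?thesis .
qed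

lemma expected_score_sum:
  fixes K :: nat
  shows "(\<Sum>i<K. expected_score (l i)) \<le> expected_score (\<lambda>j. \<Sum>i<K. l i j)"
proof (induction K)
  case 0
  show ?case using expected_score_eq_0[of 0] m_pos by simp
next
  case (Suc K)
  then show ?case
    using expected_score_superadditive[of "\<lambda>j. \<Sum>i<K. l i j" "l K"] by simp
qed

lemma expected_score_scale: "real t * expected_score len \<le> expected_score (\<lambda>j. t * len j)"
  using expected_score_sum[where K = t and l = "\<lambda>_. len"] by (simp add: mult.commute)

lemma expected_score_permute:
  assumes \<sigma>: "\<sigma> permutes {..<m}"
  shows "expected_score (\<lambda>j. len (\<sigma> j)) = expected_score len"
proof -
  have \<sigma>_lt: "\<sigma> j < m" if "j < m" for j using permutes_in_image[OF \<sigma>] that by simp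
  have rows: "inj_on (\<lambda>j. Suc (\<sigma> j)) {..<m}" "(\<lambda>j. Suc (\<sigma> j)) ` {..<m} \<subseteq> {1..m}"
    using permutes_inj[OF \<sigma>] \<sigma>_lt by (auto simp: inj_on_def inj_def Suc_le_eq)
  have "block X m (\<lambda>j. Suc (\<sigma> j)) (\<lambda>_. 0) (\<lambda>j. len (\<sigma> j)) \<omega>
      = permute_list \<sigma> (block X m Suc (\<lambda>_. 0) len \<omega>)" for \<omega>
    unfolding block_def permute_list_def using \<sigma>_lt by simp
  then have "expected_score (\<lambda>j. len (\<sigma> j)) = (\<integral>\<omega>. opt_score S (block X m Suc (\<lambda>_. 0) len \<omega>) \<partial>M)"
    using integral_block[OF rows, of "\<lambda>_. 0" "\<lambda>j. len (\<sigma> j)"]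
    by (simp add: opt_score_permute[OF block_words[OF _ Suc_block_rows(2)] \<sigma>] cong: Bochner_Integration.integral_cong)
  then show ?thesis unfolding expected_score_def .
qed

lemma integrable_Ln: "integrable M (Ln S m X n)"
  unfolding Ln_eq_block by (rule integrable_block[OF Suc_block_rows])

lemma integral_Ln: "(\<integral>\<omega>. Ln S m X n \<omega> \<partial>M) = expected_score (\<lambda>_. n)"
  unfolding Ln_eq_block expected_score_def ..

lemma gamma_star_limit:
  shows "(\<lambda>n. expected_score (\<lambda>_. n) / real n) \<longlonglongrightarrow> gamma_star M S m X"
    and "1 \<le> n \<Longrightarrow> expected_score (\<lambda>_. n) / real n \<le> gamma_star M S m X"
proof -
  obtain \<Gamma> where lim: "(\<lambda>n. expected_score (\<lambda>_. n) / real n) \<longlonglongrightarrow> \<Gamma>"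
    and upper: "\<forall>n\<ge>1. expected_score (\<lambda>_. n) / real n \<le> \<Gamma>"
  proof -
    have "expected_score (\<lambda>_. s) + expected_score (\<lambda>_. t) \<le> expected_score (\<lambda>_. s + t)" for s t
      using expected_score_superadditive[of "\<lambda>_. s" "\<lambda>_. t"] by simp
    moreover have "expected_score (\<lambda>_. n) \<le> S_sup * real n" for n
      using expected_score_le[OF m_pos, of "\<lambda>_. n"] by simp
    ultimately show thesis
      using fekete_superadditive[of "\<lambda>n. expected_score (\<lambda>_. n)"] expected_score_nonneg that by blast
  qed
  have "gamma_star M S m X = \<Gamma>"
    unfolding gamma_star_def integral_Ln using lim by (rule limI)
  with lim upper show "(\<lambda>n. expected_score (\<lambda>_. n) / real n) \<longlonglongrightarrow> gamma_star M S m X"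
    and "1 \<le> n \<Longrightarrow> expected_score (\<lambda>_. n) / real n \<le> gamma_star M S m X" by auto
qed

text \<open>Averaging over the cyclic shifts of the lengths turns a block into one of equal lengths.\<close>

lemma expected_score_le_gamma_star:
  "real m * expected_score len \<le> gamma_star M S m X * real (\<Sum>j<m. len j)"
proof -
  define T where "T = (\<Sum>j<m. len j)"
  define rot where "rot c j = (if j < m then (j + c) mod m else j)" for c j
  have "real m * expected_score len = (\<Sum>c<m. expected_score (\<lambda>j. len (rot c j)))"
    unfolding rot_def using expected_score_permute[OF rotation_permutes] by simp
  also have "\<dots> \<le> expected_score (\<lambda>j. \<Sum>c<m. len (rot c j))"
    by (rule expected_score_sum)
  also have "\<dots> = expected_score (\<lambda>_. T)"
  proof (rule expected_score_cong)
    fix j assume "j < m"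
    then have "(\<Sum>c<m. len (rot c j)) = (\<Sum>c<m. len ((j + c) mod m))" unfolding rot_def by simp
    also have "\<dots> = T"
      unfolding T_def using sum.reindex_bij_betw[OF bij_betw_add_mod[of j m], of len] by simp
    finally show "(\<Sum>c<m. len (rot c j)) = T" .
  qed
  also have "\<dots> \<le> gamma_star M S m X * real T"
  proof (cases "T = 0")
    case True
    then show ?thesis using expected_score_eq_0[OF m_pos] by simp
  next
    case False
    then show ?thesis using gamma_star_limit(2)[of T] by (simp add: divide_le_eq mult.commute)
  qed
  finally show ?thesis unfolding T_def .
qed

lemma expected_score_ray_limit:
  "\<exists>H. (\<lambda>t. expected_score (\<lambda>j. t * len j) / real t) \<longlonglongrightarrow> H \<and> expected_score len \<le> H"
proof -
  have "expected_score (\<lambda>j. s * len j) + expected_score (\<lambda>j. t * len j) \<le> expected_score (\<lambda>j. (s + t) * len j)"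
    for s t
    using expected_score_superadditive[of "\<lambda>j. s * len j" "\<lambda>j. t * len j"] by (simp add: add_mult_distrib)
  moreover have "expected_score (\<lambda>j. t * len j) \<le> S_sup * real (len 0) * real t" for t
    using expected_score_le[OF m_pos, of "\<lambda>j. t * len j"] by (simp add: mult_ac)
  ultimately obtain H where H: "(\<lambda>t. expected_score (\<lambda>j. t * len j) / real t) \<longlonglongrightarrow> H"
    using fekete_superadditive[of "\<lambda>t. expected_score (\<lambda>j. t * len j)"] expected_score_nonneg by blast
  moreover have "expected_score len \<le> H"
  proof (rule LIMSEQ_le_const[OF H])
    show "\<exists>N. \<forall>t\<ge>N. expected_score len \<le> expected_score (\<lambda>j. t * len j) / real t"
      using expected_score_scale by (intro exI[of _ 1]) (auto simp: le_divide_eq mult.commute)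
  qed
  ultimately show ?thesis by blast
qed

lemma expected_score_plen_limit:
  fixes len :: "nat \<Rightarrow> nat"
  assumes v: "0 < len 0" and H: "(\<lambda>t. expected_score (\<lambda>j. t * len j) / real t) \<longlonglongrightarrow> H"
  defines "p \<equiv> \<lambda>j. real (len (j - 1)) / real (len 0)"
  shows "(\<lambda>n. expected_score (\<lambda>j. plen p n (Suc j)) / real n) \<longlonglongrightarrow> H / real (len 0)"
proof (rule tendsto_div_nat_sandwich[OF v H])
  show "expected_score (\<lambda>j. 0 * len j) = 0" using expected_score_eq_0[OF m_pos] by simp
  fix n :: nat assume "1 \<le> n"
  then show "expected_score (\<lambda>j. n div len 0 * len j) / real n \<le> expected_score (\<lambda>j. plen p n (Suc j)) / real n
      \<and> expected_score (\<lambda>j. plen p n (Suc j)) / real n \<le> expected_score (\<lambda>j. (n div len 0 + 1) * len j) / real n"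
    using plen_bounds[of len, OF v] unfolding p_def
    by (auto intro!: divide_right_mono expected_score_mono)
qed

lemma expected_score_le_gamma_star_p:
  fixes len :: "nat \<Rightarrow> nat"
  assumes pos: "\<And>j. j < m \<Longrightarrow> 0 < len j"
  defines "p \<equiv> \<lambda>j. real (len (j - 1)) / real (len 0)"
  shows "real m * expected_score len \<le> gamma_star_p M S m X p * real (\<Sum>j<m. len j)"
proof -
  define v T where "v = len 0" and "T = (\<Sum>j<m. len j)"
  have v: "0 < v" unfolding v_def using pos m_pos by simp
  have "v \<le> T" unfolding T_def v_def using m_pos by (intro member_le_sum) auto
  then have T: "0 < T" using v by simp
  obtain H where H: "(\<lambda>t. expected_score (\<lambda>j. t * len j) / real t) \<longlonglongrightarrow> H"
    and le_H: "expected_score len \<le> H"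
    using expected_score_ray_limit by blast
  have "1 + (\<Sum>i=2..m. p i) = real T / real v"
    using sum_length_ratios[of m len, OF m_pos v[unfolded v_def]] unfolding p_def T_def v_def .
  then have seq: "(\<lambda>n. real m * expected_score (\<lambda>j. plen p n (Suc j)) / (real n * (1 + (\<Sum>i=2..m. p i))))
      = (\<lambda>n. real m * real v / real T * (expected_score (\<lambda>j. plen p n (Suc j)) / real n))"
    using v T by (intro ext) (simp add: mult_ac)
  have "(\<lambda>n. expected_score (\<lambda>j. plen p n (Suc j)) / real n) \<longlonglongrightarrow> H / real v"
    unfolding p_def v_def by (rule expected_score_plen_limit[OF v[unfolded v_def] H])
  then have "gamma_star_p M S m X p = real m * real v / real T * (H / real v)"
    unfolding gamma_star_p_def segments_eq_block integral_block_Suc seq by (intro limI tendsto_mult_left)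
  then have "real m * H = gamma_star_p M S m X p * real T"
    using v T by (simp add: field_simps)
  then show ?thesis
    using le_H m_pos unfolding T_def by (metis mult_left_mono of_nat_0_le_iff)
qed

lemma integral_L_r:
  shows "integrable M (L_r S m X v d r)"
    and "(\<integral>\<omega>. L_r S m X v d r \<omega> \<partial>M) = (\<Sum>k=1..d. expected_score (block_lengths v r k))"
  unfolding L_r_eq_blocks[OF m_pos, abs_def]
  using integrable_block[OF Suc_block_rows] integral_block_Suc by (simp_all add: integral_sum)

lemma expected_score_bad_block:
  assumes "0 \<le> \<delta>" and "0 < len 0"
    and gamma_p: "\<forall>p. (\<forall>j\<in>{2..m}. 0 < p j) \<and> (\<exists>j\<in>{2..m}. p j < p1 j \<or> p2 j < p j)
                   \<longrightarrow> gamma_star_p M S m X p \<le> \<delta>"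
    and bad: "\<exists>j\<in>{2..m}. \<not> (real (len 0) * p1 j \<le> real (len (j - 1)) \<and> real (len (j - 1)) \<le> real (len 0) * p2 j)"
  shows "real m * expected_score len \<le> \<delta> * real (\<Sum>j<m. len j)"
proof (cases "\<forall>j<m. 0 < len j")
  case True
  define p where "p j = real (len (j - 1)) / real (len 0)" for j
  have "\<forall>j\<in>{2..m}. 0 < p j" using True \<open>0 < len 0\<close> unfolding p_def by auto
  moreover obtain j where "j \<in> {2..m}"
    and "\<not> (real (len 0) * p1 j \<le> real (len (j - 1)) \<and> real (len (j - 1)) \<le> real (len 0) * p2 j)"
    using bad by blast
  then have "\<exists>j\<in>{2..m}. p j < p1 j \<or> p2 j < p j"
    using \<open>0 < len 0\<close> unfolding p_def
    by (auto simp: pos_divide_less_eq pos_less_divide_eq mult.commute not_le)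
  ultimately have "gamma_star_p M S m X p \<le> \<delta>" using gamma_p by blast
  then show ?thesis
    using expected_score_le_gamma_star_p[of len] True unfolding p_def[abs_def]
    by (meson order_trans mult_right_mono of_nat_0_le_iff)
next
  case False
  then show ?thesis using expected_score_eq_0 \<open>0 \<le> \<delta>\<close> by (auto simp del: of_nat_sum)
qed

lemma expected_score_outside_window:
  assumes "0 \<le> \<delta>" "\<delta> \<le> gamma_star M S m X"
    and gamma_p: "\<forall>p. (\<forall>j\<in>{2..m}. 0 < p j) \<and> (\<exists>j\<in>{2..m}. p j < p1 j \<or> p2 j < p j)
                   \<longrightarrow> gamma_star_p M S m X p \<le> \<delta>"
    and "0 < v" and bad: "\<not> in_window m v p1 p2 r k"
  shows "real m * expected_score (block_lengths v r k)
    \<le> gamma_star M S m X * real (\<Sum>j<m. block_lengths v r k j) - (gamma_star M S m X - \<delta>) * real v"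
proof -
  define T where "T = (\<Sum>j<m. block_lengths v r k j)"
  have lengths: "block_lengths v r k 0 = v" "block_lengths v r k (j - 1) = r j k - r j (k - 1)"
    if "j \<in> {2..m}" for j
    using that by (auto simp: block_lengths_def)
  have "v \<le> T"
    unfolding T_def using member_le_sum[of 0 "{..<m}" "block_lengths v r k"] m_pos
    by (simp add: block_lengths_def)
  moreover have "real m * expected_score (block_lengths v r k) \<le> \<delta> * real T"
    unfolding T_def
  proof (rule expected_score_bad_block[OF \<open>0 \<le> \<delta>\<close> _ gamma_p])
    show "0 < block_lengths v r k 0" using \<open>0 < v\<close> by (simp add: block_lengths_def)
    show "\<exists>j\<in>{2..m}. \<not> (real (block_lengths v r k 0) * p1 j \<le> real (block_lengths v r k (j - 1)) \<and>
        real (block_lengths v r k (j - 1)) \<le> real (block_lengths v r k 0) * p2 j)"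
      using bad lengths unfolding in_window_def by (simp add: mult.commute)
  qed
  ultimately have "real m * expected_score (block_lengths v r k)
      \<le> gamma_star M S m X * real T - (gamma_star M S m X - \<delta>) * real T"
    by (simp add: algebra_simps)
  also have "\<dots> \<le> gamma_star M S m X * real T - (gamma_star M S m X - \<delta>) * real v"
    using \<open>v \<le> T\<close> assms(2) by (simp add: mult_left_mono)
  finally show ?thesis unfolding T_def .
qed

text \<open>Blocks in the window lose nothing against \<open>\<gamma>*\<close>, each other block loses at least
  \<open>(\<gamma>* - \<delta>) v\<close>, and a tuple in \<open>R-bar\<close> has more than \<open>\<epsilon> d\<close> blocks outside the window.\<close>

lemma expected_L_r_le:
  assumes "0 \<le> \<delta>" "\<delta> \<le> gamma_star M S m X"
    and gamma_p: "\<forall>p. (\<forall>j\<in>{2..m}. 0 < p j) \<and> (\<exists>j\<in>{2..m}. p j < p1 j \<or> p2 j < p j)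
                   \<longrightarrow> gamma_star_p M S m X p \<le> \<delta>"
    and "0 < v" and r: "r \<in> Rbar m v d \<epsilon> p1 p2"
  shows "real m * (\<integral>\<omega>. L_r S m X v d r \<omega> \<partial>M)
    \<le> gamma_star M S m X * real m * real (v * d) - (gamma_star M S m X - \<delta>) * \<epsilon> * real (v * d)"
proof -
  define \<Gamma> where "\<Gamma> = gamma_star M S m X"
  define good where "good = {k\<in>{1..d}. in_window m v p1 p2 r k}"
  define T where "T k = (\<Sum>j<m. block_lengths v r k j)" for k
  have card_good: "real (card good) < (1 - \<epsilon>) * real d" and adm: "admissible_r m v d r"
    using r unfolding Rbar_def good_def in_window_def by auto
  have "real m * expected_score (block_lengths v r k) \<le> \<Gamma> * real (T k) - (if k \<in> good then 0 else (\<Gamma> - \<delta>) * real v)"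
    if "k \<in> {1..d}" for k
  proof (cases "k \<in> good")
    case True
    then show ?thesis
      using expected_score_le_gamma_star[of "block_lengths v r k"] unfolding T_def \<Gamma>_def by simp
  next
    case False
    then show ?thesis
      using expected_score_outside_window[OF assms(1,2) gamma_p \<open>0 < v\<close>] that
      unfolding T_def \<Gamma>_def good_def by simp
  qed
  then have "real m * (\<integral>\<omega>. L_r S m X v d r \<omega> \<partial>M)
      \<le> (\<Sum>k=1..d. \<Gamma> * real (T k) - (if k \<in> good then 0 else (\<Gamma> - \<delta>) * real v))"
    unfolding integral_L_r(2) sum_distrib_left by (intro sum_mono) auto
  also have "\<dots> = \<Gamma> * real m * real (v * d) - real (card ({1..d} - good)) * ((\<Gamma> - \<delta>) * real v)"
  proof -
    have "(\<Sum>k=1..d. real (T k)) = real m * real (v * d)"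
      using sum_block_lengths[OF adm] unfolding T_def by (simp flip: of_nat_sum of_nat_mult)
    moreover have "(\<Sum>k=1..d. if k \<in> good then 0 else (\<Gamma> - \<delta>) * real v) = (\<Sum>k\<in>{1..d} - good. (\<Gamma> - \<delta>) * real v)"
      by (rule sum.mono_neutral_cong_right) auto
    ultimately show ?thesis by (simp add: sum_subtractf flip: sum_distrib_left)
  qed
  also have "\<dots> \<le> \<Gamma> * real m * real (v * d) - (\<Gamma> - \<delta>) * \<epsilon> * real (v * d)"
  proof -
    have "good \<subseteq> {1..d}" unfolding good_def by auto
    then have "\<epsilon> * real d \<le> real (card ({1..d} - good))"
      using card_diff_gt[OF _ card_good] by fastforce
    then have "\<epsilon> * real d * ((\<Gamma> - \<delta>) * real v) \<le> real (card ({1..d} - good)) * ((\<Gamma> - \<delta>) * real v)"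
      using assms(2) unfolding \<Gamma>_def by (intro mult_right_mono) auto
    then show ?thesis by (simp add: algebra_simps)
  qed
  finally show ?thesis unfolding \<Gamma>_def .
qed

lemma integral_L_r_minus_Ln_le:
  assumes "0 \<le> \<delta>" "\<delta> \<le> gamma_star M S m X"
    and gamma_p: "\<forall>p. (\<forall>j\<in>{2..m}. 0 < p j) \<and> (\<exists>j\<in>{2..m}. p j < p1 j \<or> p2 j < p j)
                   \<longrightarrow> gamma_star_p M S m X p \<le> \<delta>"
    and "0 < v" "0 < d" and r: "r \<in> Rbar m v d \<epsilon> p1 p2"
    and Ln: "gamma_star M S m X - c \<le> expected_score (\<lambda>_. v * d) / real (v * d)"
  shows "(\<integral>\<omega>. (L_r S m X v d r \<omega> - Ln S m X (v * d) \<omega>) \<partial>M)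
    \<le> (c - (gamma_star M S m X - \<delta>) * \<epsilon> / real m) * real (v * d)"
proof -
  define \<Gamma> n where "\<Gamma> = gamma_star M S m X" and "n = v * d"
  have m: "0 < real m" and n: "0 < real n" using m_pos \<open>0 < v\<close> \<open>0 < d\<close> by (simp_all add: n_def)
  have "(\<integral>\<omega>. L_r S m X v d r \<omega> \<partial>M) \<le> (\<Gamma> * real m * real n - (\<Gamma> - \<delta>) * \<epsilon> * real n) / real m"
    using expected_L_r_le[OF assms(1,2) gamma_p \<open>0 < v\<close> r] m
    unfolding \<Gamma>_def n_def by (subst pos_le_divide_eq) (auto simp: mult.commute)
  moreover have "(\<Gamma> - c) * real n \<le> (\<integral>\<omega>. Ln S m X n \<omega> \<partial>M)"
    using Ln n unfolding integral_Ln \<Gamma>_def n_def by (simp add: pos_le_divide_eq)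
  moreover have "(\<Gamma> * real m * real n - (\<Gamma> - \<delta>) * \<epsilon> * real n) / real m - (\<Gamma> - c) * real n
      = (c - (\<Gamma> - \<delta>) * \<epsilon> / real m) * real n"
    using m by (simp add: field_simps)
  ultimately have "(\<integral>\<omega>. L_r S m X v d r \<omega> \<partial>M) - (\<integral>\<omega>. Ln S m X n \<omega> \<partial>M)
      \<le> (c - (\<Gamma> - \<delta>) * \<epsilon> / real m) * real n"
    by linarith
  then show ?thesis
    unfolding \<Gamma>_def n_def using integral_L_r(1) integrable_Ln by (subst Bochner_Integration.integral_diff) auto
qed

end

theorem lemma3p2:
  fixes M :: "'w measure" and A :: "real set" and m :: nat
    and X :: "nat \<Rightarrow> nat \<Rightarrow> 'w \<Rightarrow> real" and S :: "real list \<Rightarrow> real"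
    and D \<epsilon> \<delta> \<eta> :: real and p1 p2 :: "nat \<Rightarrow> real"
  assumes "prob_space M"
    and "m \<ge> 2"
    and "finite A"
    and X_meas: "\<forall>j\<in>{1..m}. \<forall>i\<ge>1. X j i \<in> borel_measurable M"
    and X_vals: "\<forall>j\<in>{1..m}. \<forall>i\<ge>1. \<forall>\<omega>\<in>space M. X j i \<omega> \<in> A"
    and X_indep: "prob_space.indep_vars M (\<lambda>_. borel) (\<lambda>(j, i). X j i) ({1..m} \<times> {1..})"
    and X_ident: "\<forall>j\<in>{1..m}. \<forall>i\<ge>1. distr M borel (X j i) = distr M borel (X 1 1)"
    and S_nonneg: "\<forall>x. length x = m \<and> set x \<subseteq> A \<longrightarrow> S x \<ge> 0"
    and S_nonzero: "\<exists>x. length x = m \<and> set x \<subseteq> A \<and> S x \<noteq> 0"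
    and S_sym: "\<forall>x \<sigma>. length x = m \<and> set x \<subseteq> A \<and> \<sigma> permutes {..<m}
                   \<longrightarrow> S (permute_list \<sigma> x) = S x"
    and S_bdd: "bdd_above (S ` {x. length x = m \<and> set x \<subseteq> A})"
    and "D > 0"
    and S_lip: "\<forall>x y. length x = m \<and> set x \<subseteq> A \<and> length y = m \<and> set y \<subseteq> A
                   \<and> card {i. i < m \<and> x ! i \<noteq> y ! i} \<le> 1 \<longrightarrow> \<bar>S x - S y\<bar> \<le> D"
    and "\<epsilon> > 0"
    and "0 < \<delta>" and "\<delta> < gamma_star M S m X"
    and p_bounds: "\<forall>j\<in>{2..m}. 0 < p1 j \<and> p1 j < 1 \<and> 1 < p2 j"
    and gamma_p: "\<forall>p. (\<forall>j\<in>{2..m}. 0 < p j) \<and> (\<exists>j\<in>{2..m}. p j < p1 j \<or> p2 j < p j)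
                   \<longrightarrow> gamma_star_p M S m X p \<le> \<delta>"
    and "0 < \<eta>" and "\<eta> < gamma_star M S m X - \<delta>"
  shows "\<exists>N. \<forall>n\<ge>N. \<forall>v d. 0 < v \<and> 0 < d \<and> n = v * d \<longrightarrow>
           (\<forall>r\<in>Rbar m v d \<epsilon> p1 p2.
              (\<integral>\<omega>. (L_r S m X v d r \<omega> - Ln S m X n \<omega>) \<partial>M) \<le> - (\<eta> * \<epsilon> * real n / real m))"
proof -
  interpret lcs_model M A m X S
    by (intro lcs_model.intro iid_array.intro iid_array_axioms.intro symmetric_alignment_score.intro
        symmetric_alignment_score_axioms.intro alignment_score.intro)
      (fact assms | use \<open>m \<ge> 2\<close> in simp)+
  define c where "c = (gamma_star M S m X - \<delta> - \<eta>) * \<epsilon> / real m"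
  have "0 < c" unfolding c_def using assms by simp
  then obtain N where N: "\<forall>n\<ge>N. norm (expected_score (\<lambda>_. n) / real n - gamma_star M S m X) < c"
    using LIMSEQ_D[OF gamma_star_limit(1)] by blast
  show ?thesis
  proof (intro exI[of _ "max N 1"] allI impI ballI)
    fix n v d r
    assume n: "max N 1 \<le> n" and vd: "0 < v \<and> 0 < d \<and> n = v * d" and r: "r \<in> Rbar m v d \<epsilon> p1 p2"
    then have "norm (expected_score (\<lambda>_. n) / real n - gamma_star M S m X) < c" using N by auto
    then have "gamma_star M S m X - c \<le> expected_score (\<lambda>_. v * d) / real (v * d)"
      using vd by (auto simp: abs_less_iff)
    then have "(\<integral>\<omega>. (L_r S m X v d r \<omega> - Ln S m X n \<omega>) \<partial>M)
        \<le> (c - (gamma_star M S m X - \<delta>) * \<epsilon> / real m) * real n"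
      using integral_L_r_minus_Ln_le[of \<delta> p1 p2, OF _ _ gamma_p _ _ r] vd assms by simp
    also have "\<dots> = - (\<eta> * \<epsilon> * real n / real m)"
      unfolding c_def using \<open>m \<ge> 2\<close> by (simp add: field_simps)
    finally show "(\<integral>\<omega>. (L_r S m X v d r \<omega> - Ln S m X n \<omega>) \<partial>M) \<le> - (\<eta> * \<epsilon> * real n / real m)" .
  qed
qed

end
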